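(* Let $F:\mathcal{P}(V,A)\to S_2(A)$ be a non-Marian, reducible, weakly viable consular election rule satisfying SPP and SPO. Let $R\subseteq S_2(A)$ be the range of $F$ and $D=\{\alpha(L)|_R : L \text{ a linear order on } A\}$. Then $D$ is not a linked domain over $R$.
   Context: $V$ is a finite nonempty set of voters, $A$ a finite set of alternatives; a profile $P$ assigns to each voter $i$ a linear order $P_i$ on $A$; $P_i'P_{-i}$ replaces voter $i$'s order by $P_i'$; $P|_B$ is the profile of restrictions to $B\subseteq A$. $S_2(A)$ is the set of 2-element subsets of $A$; a consular election rule is a map $F:\mathcal{P}(V,A)\to S_2(A)$. SPO: for all $P$, $i$, $P_i'$, $\mathrm{best}(P_i,F(P))\succeq_i\mathrm{best}(P_i,F(P_i'P_{-i}))$; SPP: same with $\mathrm{worst}$, where $\mathrm{best}(P_i,W)$, $\mathrm{worst}(P_i,W)$ are the $P_i$-best and $P_i$-worst elements of $W$. Weakly viable: every $a\in A$ lies in $F(P)$ for some $P$. Marian: some $m\in A$ lies in $F(P)$ for every $P$. Reducible: there is a partition $A=B\uplus C$ and social choice functions $G:\mathcal{P}(V,B)\to B$, $H:\mathcal{P}(V,C)\to C$ with $F(P)=\{G(P|_B),H(P|_C)\}$ for all $P$. For a linear order $L$ on $A$, $\alpha(L)$ is the linear order on $S_2(A)$ with $X$ above $Y$ iff $\mathrm{best}(L,X)$ is above $\mathrm{best}(L,Y)$ in $L$, or they are equal and $\mathrm{worst}(L,X)$ is above $\mathrm{worst}(L,Y)$; $\alpha(L)|_R$ is its restriction to $R$.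 In a domain $D$ of linear orders over $R$, $x,y\in R$ are connected if some order in $D$ ranks $x$ first and $y$ second and some order in $D$ ranks $y$ first and $x$ second; $D$ is linked if $R$ can be enumerated $x_1,\dots,x_q$ with $x_1$ connected to $x_2$ and each $x_j$ ($j\ge3$) connected to at least two of $x_1,\dots,x_{j-1}$. *)

theory Defs
  imports Main
begin

text \<open>A linear order on a set X is a relation L with (x,y) in L meaning
  x is ranked weakly above y (library notion linear_order_on).\<close>

definition profiles :: "'v set \<Rightarrow> 'a set \<Rightarrow> ('v \<Rightarrow> 'a rel) set" where
  "profiles V X = {P. (\<forall>i\<in>V. linear_order_on X (P i)) \<and> (\<forall>i. i \<notin> V \<longrightarrow> P i = {})}"

definition restrict_profile :: "('v \<Rightarrow> 'a rel) \<Rightarrow> 'a set \<Rightarrow> ('v \<Rightarrow> 'a rel)" where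
  "restrict_profile P B = (\<lambda>i. P i \<inter> (B \<times> B))"

definition S2 :: "'a set \<Rightarrow> 'a set set" where
  "S2 A = {W. W \<subseteq> A \<and> card W = 2}"

definition best :: "'a rel \<Rightarrow> 'a set \<Rightarrow> 'a" where
  "best L W = (THE x. x \<in> W \<and> (\<forall>y\<in>W. (x, y) \<in> L))"

definition worst :: "'a rel \<Rightarrow> 'a set \<Rightarrow> 'a" where
  "worst L W = (THE x. x \<in> W \<and> (\<forall>y\<in>W. (y, x) \<in> L))"

definition consular_rule :: "'v set \<Rightarrow> 'a set \<Rightarrow> (('v \<Rightarrow> 'a rel) \<Rightarrow> 'a set) \<Rightarrow> bool" where
  "consular_rule V A F = (\<forall>P\<in>profiles V A. F P \<in> S2 A)"

definition SPO :: "'v set \<Rightarrow> 'a set \<Rightarrow> (('v \<Rightarrow> 'a rel) \<Rightarrow> 'a set) \<Rightarrow> bool" where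
  "SPO V A F = (\<forall>P\<in>profiles V A. \<forall>i\<in>V. \<forall>L. linear_order_on A L \<longrightarrow>
      (best (P i) (F P), best (P i) (F (P(i := L)))) \<in> P i)"

definition SPP :: "'v set \<Rightarrow> 'a set \<Rightarrow> (('v \<Rightarrow> 'a rel) \<Rightarrow> 'a set) \<Rightarrow> bool" where
  "SPP V A F = (\<forall>P\<in>profiles V A. \<forall>i\<in>V. \<forall>L. linear_order_on A L \<longrightarrow>
      (worst (P i) (F P), worst (P i) (F (P(i := L)))) \<in> P i)"

definition weakly_viable :: "'v set \<Rightarrow> 'a set \<Rightarrow> (('v \<Rightarrow> 'a rel) \<Rightarrow> 'a set) \<Rightarrow> bool" where
  "weakly_viable V A F = (\<forall>a\<in>A. \<exists>P\<in>profiles V A. a \<in> F P)"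

definition marian :: "'v set \<Rightarrow> 'a set \<Rightarrow> (('v \<Rightarrow> 'a rel) \<Rightarrow> 'a set) \<Rightarrow> bool" where
  "marian V A F = (\<exists>m\<in>A. \<forall>P\<in>profiles V A. m \<in> F P)"

definition reducible :: "'v set \<Rightarrow> 'a set \<Rightarrow> (('v \<Rightarrow> 'a rel) \<Rightarrow> 'a set) \<Rightarrow> bool" where
  "reducible V A F = (\<exists>B C G H. B \<union> C = A \<and> B \<inter> C = {} \<and>
      (\<forall>P\<in>profiles V B. G P \<in> B) \<and> (\<forall>P\<in>profiles V C. H P \<in> C) \<and>
      (\<forall>P\<in>profiles V A. F P = {G (restrict_profile P B), H (restrict_profile P C)}))"

definition alpha :: "'a set \<Rightarrow> 'a rel \<Rightarrow> 'a set rel" where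
  "alpha A L = {(X, Y). X \<in> S2 A \<and> Y \<in> S2 A \<and>
      ((best L X \<noteq> best L Y \<and> (best L X, best L Y) \<in> L) \<or>
       (best L X = best L Y \<and> (worst L X, worst L Y) \<in> L))}"

definition first_second :: "'b set \<Rightarrow> 'b rel \<Rightarrow> 'b \<Rightarrow> 'b \<Rightarrow> bool" where
  "first_second R Ord x y = (x \<in> R \<and> y \<in> R \<and> x \<noteq> y \<and> (\<forall>z\<in>R. (x, z) \<in> Ord) \<and>
      (\<forall>z\<in>R - {x}. (y, z) \<in> Ord))"

definition connected_in :: "'b set \<Rightarrow> 'b rel set \<Rightarrow> 'b \<Rightarrow> 'b \<Rightarrow> bool" where
  "connected_in R D x y = ((\<exists>Ord\<in>D. first_second R Ord x y) \<and> (\<exists>Ord\<in>D. first_second R Ord y x))"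

definition linked :: "'b set \<Rightarrow> 'b rel set \<Rightarrow> bool" where
  "linked R D = (\<exists>xs. distinct xs \<and> set xs = R \<and> length xs \<ge> 2 \<and>
      connected_in R D (xs ! 0) (xs ! 1) \<and>
      (\<forall>j. 2 \<le> j \<and> j < length xs \<longrightarrow>
         2 \<le> card {k. k < j \<and> connected_in R D (xs ! j) (xs ! k)}))"

end

theory Submission
  imports Defs
begin

text \<open>A reducible rule elects one candidate from each block of a partition \<open>A = B \<union> C\<close>,
  and the two choices depend on disjoint parts of the profile; hence any member of an elected pair
  can be combined with some member of any other elected pair (the range is exchange closed).
  In an exchange-closed range two pairs that are connected in \<open>D\<close> must meet: if \<open>X\<close> comes first
  and \<open>Y\<close> second for \<open>\<alpha>(L)\<close> with \<open>X \<inter> Y = {}\<close>, then pairing the \<open>L\<close>-best element of \<open>X\<close>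
  with a member of \<open>Y\<close> yields a pair that \<open>Y\<close> must precede, which puts the best element of \<open>Y\<close>
  above that of \<open>X\<close>. Since every elected pair has one candidate in each block, a pair meeting two
  distinct pairs that share a candidate \<open>e\<close> contains \<open>e\<close>; along a linked enumeration, a candidate
  common to the first two pairs therefore lies in every elected pair, so the rule is Marian.\<close>

lemma linear_order_on_restrict:
  "linear_order_on A L \<Longrightarrow> B \<subseteq> A \<Longrightarrow> linear_order_on B (Restr L B)"
  unfolding order_on_defs refl_on_def trans_def antisym_def total_on_def by blast

lemma linear_order_on_concat:
  assumes L: "linear_order_on B L" and M: "linear_order_on C M" and BC: "B \<inter> C = {}"
  shows "linear_order_on (B \<union> C) (L \<union> M \<union> B \<times> C)"
proof -
  let ?N = "L \<union> M \<union> B \<times> C"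
  have "?N \<subseteq> (B \<union> C) \<times> (B \<union> C)" "refl_on (B \<union> C) ?N" "total_on (B \<union> C) ?N"
    using L M unfolding order_on_defs refl_on_def total_on_def by blast+
  moreover have "trans ?N"
    using L M BC unfolding order_on_defs trans_def by blast
  moreover have "antisym ?N"
    using L M BC unfolding order_on_defs antisym_def by blast
  ultimately show ?thesis unfolding order_on_defs by blast
qed

lemma best_pair:
  assumes "linear_order_on A L" "a \<in> A" "(a, b) \<in> L"
  shows "best L {a, b} = a"
  unfolding best_def
proof (rule the_equality)
  show "a \<in> {a, b} \<and> (\<forall>y\<in>{a, b}. (a, y) \<in> L)"
    using assms unfolding order_on_defs refl_on_def by blast
next
  show "x = a" if "x \<in> {a, b} \<and> (\<forall>y\<in>{a, b}. (x, y) \<in> L)" for x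
    using that assms unfolding order_on_defs antisym_def by blast
qed

lemma S2_obtain_best:
  assumes "W \<in> S2 A" "linear_order_on A L"
  obtains a b where "W = {a, b}" "a \<in> A" "b \<in> A" "(a, b) \<in> L" "best L W = a"
proof -
  obtain a b where W: "W = {a, b}" "a \<noteq> b" "a \<in> A" "b \<in> A"
    using assms(1) unfolding S2_def by (auto simp: card_2_iff)
  then have "(a, b) \<in> L \<or> (b, a) \<in> L"
    using assms(2) unfolding order_on_defs total_on_def by blast
  then show thesis
    using that W best_pair[OF assms(2)] by (metis insert_commute)
qed

lemma alpha_best:
  assumes "(X, Y) \<in> alpha A L" "linear_order_on A L"
  shows "(best L X, best L Y) \<in> L"
proof -
  have "X \<in> S2 A" using assms(1) unfolding alpha_def by blast
  then have "best L X \<in> A" using assms(2) by (metis S2_obtain_best)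
  then show ?thesis
    using assms unfolding alpha_def order_on_defs refl_on_def by auto
qed

definition exchange_closed :: "'a set set \<Rightarrow> bool" where
  "exchange_closed R \<longleftrightarrow> (\<forall>X\<in>R. \<forall>Y\<in>R. \<forall>u\<in>X. \<exists>v\<in>Y. {u, v} \<in> R)"

lemma connected_in_alpha_meet:
  assumes "R \<subseteq> S2 A" "exchange_closed R"
    and "connected_in R {alpha A L \<inter> R \<times> R | L. linear_order_on A L} X Y"
  shows "X \<inter> Y \<noteq> {}"
proof
  assume disjoint: "X \<inter> Y = {}"
  obtain L where L: "linear_order_on A L" and "first_second R (alpha A L \<inter> R \<times> R) X Y"
    using assms(3) unfolding connected_in_def by blast
  then have R: "X \<in> R" "Y \<in> R" and XY: "(X, Y) \<in> alpha A L"
    and Y_second: "\<And>Z. Z \<in> R \<Longrightarrow> Z \<noteq> X \<Longrightarrow> (Y, Z) \<in> alpha A L"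
    unfolding first_second_def by auto
  have "X \<in> S2 A" "Y \<in> S2 A" using R assms(1) by blast+
  obtain x1 x2 where X: "X = {x1, x2}" "x1 \<in> A" "x2 \<in> A" "(x1, x2) \<in> L" "best L X = x1"
    using S2_obtain_best[OF \<open>X \<in> S2 A\<close> L] .
  obtain y1 y2 where Y: "Y = {y1, y2}" "y1 \<in> A" "y2 \<in> A" "(y1, y2) \<in> L" "best L Y = y1"
    using S2_obtain_best[OF \<open>Y \<in> S2 A\<close> L] .
  have x1y1: "(x1, y1) \<in> L" using alpha_best[OF XY L] X Y by simp
  obtain v where v: "v \<in> Y" "{x1, v} \<in> R"
    using assms(2) R X unfolding exchange_closed_def by blast
  have "(y1, v) \<in> L"
    using v(1) Y L unfolding order_on_defs refl_on_def by blast
  with x1y1 have "(x1, v) \<in> L"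
    using L unfolding order_on_defs by (blast dest: transD)
  then have "best L {x1, v} = x1" using best_pair[OF L X(2)] by simp
  moreover have "{x1, v} \<noteq> X" using v(1) disjoint X by blast
  ultimately have "(y1, x1) \<in> L" using alpha_best[OF Y_second[OF v(2)] L] Y by simp
  then have "x1 = y1" using x1y1 L unfolding order_on_defs antisym_def by blast
  then show False using disjoint X Y by blast
qed

definition pairs_across :: "'a set \<Rightarrow> 'a set \<Rightarrow> 'a set set \<Rightarrow> bool" where
  "pairs_across B C R \<longleftrightarrow> (\<forall>X\<in>R. \<exists>b\<in>B. \<exists>c\<in>C. X = {b, c})"

lemma pairs_across_shared_element:
  assumes "pairs_across B C R" "B \<inter> C = {}"
    and "X \<in> R" "Y \<in> R" "Z \<in> R" "Y \<noteq> Z" "e \<in> Y" "e \<in> Z"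
    and "X \<inter> Y \<noteq> {}" "X \<inter> Z \<noteq> {}"
  shows "e \<in> X"
proof (rule ccontr)
  assume "e \<notin> X"
  obtain bx cx b1 cy bz cz where "X = {bx, cx}" "Y = {b1, cy}" "Z = {bz, cz}"
    "bx \<in> B" "b1 \<in> B" "bz \<in> B" "cx \<in> C" "cy \<in> C" "cz \<in> C"
    using assms(1,3-5) unfolding pairs_across_def by metis
  then show False using assms(2,6-10) \<open>e \<notin> X\<close> by blast
qed

lemma linked_enumeration_common_element:
  assumes across: "pairs_across B C R" "B \<inter> C = {}"
    and xs: "distinct xs" "set xs = R"
    and meet: "\<And>X Y. cn X Y \<Longrightarrow> X \<inter> Y \<noteq> {}"
    and e: "e \<in> xs ! 0" "e \<in> xs ! 1"
    and step: "\<forall>j. 2 \<le> j \<and> j < length xs \<longrightarrow> 2 \<le> card {k. k < j \<and> cn (xs ! j) (xs ! k)}"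
  shows "j < length xs \<Longrightarrow> e \<in> xs ! j"
proof (induction j rule: less_induct)
  case (less j)
  show ?case
  proof (cases "j < 2")
    case True
    then show ?thesis using e by (auto simp: less_2_cases_iff)
  next
    case False
    let ?K = "{k. k < j \<and> cn (xs ! j) (xs ! k)}"
    have "2 \<le> card ?K" using step False less.prems by simp
    then obtain k1 k2 where k: "k1 \<in> ?K" "k2 \<in> ?K" "k1 \<noteq> k2"
      using card_le_Suc0_iff_eq[of ?K] card.infinite[of ?K] by force
    then have "xs ! k1 \<noteq> xs ! k2" using xs(1) less.prems by (simp add: nth_eq_iff_index_eq)
    moreover have "e \<in> xs ! k1" "e \<in> xs ! k2" using less.IH k less.prems by auto
    moreover have "xs ! j \<inter> xs ! k1 \<noteq> {}" "xs ! j \<inter> xs ! k2 \<noteq> {}" using meet k by auto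
    moreover have "xs ! j \<in> R" "xs ! k1 \<in> R" "xs ! k2 \<in> R" using xs(2) k less.prems by auto
    ultimately show ?thesis using pairs_across_shared_element[OF across] by blast
  qed
qed

lemma restrict_profile_in_profiles:
  assumes "P \<in> profiles V A" "B \<subseteq> A"
  shows "restrict_profile P B \<in> profiles V B"
  using assms linear_order_on_restrict unfolding profiles_def restrict_profile_def by blast

lemma profiles_glue:
  assumes "P1 \<in> profiles V (B \<union> C)" "P2 \<in> profiles V (B \<union> C)" "B \<inter> C = {}"
  obtains P where "P \<in> profiles V (B \<union> C)"
    "restrict_profile P B = restrict_profile P1 B" "restrict_profile P C = restrict_profile P2 C"
proof
  let ?P = "\<lambda>i. if i \<in> V then Restr (P1 i) B \<union> Restr (P2 i) C \<union> B \<times> C else {}"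
  have "linear_order_on B (Restr (P1 i) B)" "linear_order_on C (Restr (P2 i) C)" if "i \<in> V" for i
    using assms(1,2) that linear_order_on_restrict unfolding profiles_def by blast+
  then show "?P \<in> profiles V (B \<union> C)"
    using linear_order_on_concat[OF _ _ assms(3)] unfolding profiles_def by simp
  have "P1 i = {}" "P2 i = {}" if "i \<notin> V" for i
    using assms(1,2) that unfolding profiles_def by blast+
  then show "restrict_profile ?P B = restrict_profile P1 B" "restrict_profile ?P C = restrict_profile P2 C"
    using assms(3) unfolding restrict_profile_def by (fastforce split: if_splits)+
qed

locale consular_reduction =
  fixes V :: "'v set" and A B C :: "'a set"
    and G H :: "('v \<Rightarrow> 'a rel) \<Rightarrow> 'a" and F :: "('v \<Rightarrow> 'a rel) \<Rightarrow> 'a set"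
  assumes partition: "B \<union> C = A" "B \<inter> C = {}"
    and G_in: "\<And>P. P \<in> profiles V B \<Longrightarrow> G P \<in> B"
    and H_in: "\<And>P. P \<in> profiles V C \<Longrightarrow> H P \<in> C"
    and F_eq: "\<And>P. P \<in> profiles V A \<Longrightarrow> F P = {G (restrict_profile P B), H (restrict_profile P C)}"
begin

lemma range_pairs_across: "pairs_across B C (F ` profiles V A)"
  unfolding pairs_across_def
proof
  fix X assume "X \<in> F ` profiles V A"
  then obtain P where P: "P \<in> profiles V A" "X = F P" by blast
  have "B \<subseteq> A" "C \<subseteq> A" using partition by auto
  then show "\<exists>b\<in>B. \<exists>c\<in>C. X = {b, c}"
    using P F_eq G_in H_in restrict_profile_in_profiles by blast
qed

lemma range_exchange_closed: "exchange_closed (F ` profiles V A)"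
  unfolding exchange_closed_def
proof (intro ballI)
  fix X Y u assume "X \<in> F ` profiles V A" "Y \<in> F ` profiles V A" "u \<in> X"
  then obtain P1 P2 where P: "P1 \<in> profiles V A" "P2 \<in> profiles V A" "X = F P1" "Y = F P2"
    by blast
  have glue: "\<exists>P\<in>profiles V A.
      restrict_profile P B = restrict_profile Q1 B \<and> restrict_profile P C = restrict_profile Q2 C"
    if "Q1 \<in> profiles V A" "Q2 \<in> profiles V A" for Q1 Q2
    using profiles_glue[of Q1 V B C Q2] that partition by metis
  consider "u = G (restrict_profile P1 B)" | "u = H (restrict_profile P1 C)"
    using \<open>u \<in> X\<close> P F_eq by blast
  then show "\<exists>v\<in>Y. {u, v} \<in> F ` profiles V A"
  proof cases
    case 1
    then obtain P where "P \<in> profiles V A" "F P = {u, H (restrict_profile P2 C)}"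
      using glue[OF P(1,2)] F_eq by metis
    then show ?thesis using P F_eq by blast
  next
    case 2
    then obtain P where "P \<in> profiles V A" "F P = {u, G (restrict_profile P2 B)}"
      using glue[OF P(2,1)] F_eq by (metis insert_commute)
    then show ?thesis using P F_eq by blast
  qed
qed

end

theorem proposition55:
  fixes V :: "'v set" and A :: "'a set" and F :: "('v \<Rightarrow> 'a rel) \<Rightarrow> 'a set"
  assumes "finite V" and "V \<noteq> {}" and "finite A"
    and "consular_rule V A F"
    and "\<not> marian V A F" and "reducible V A F" and "weakly_viable V A F"
    and "SPP V A F" and "SPO V A F"
  shows "\<not> linked (F ` profiles V A) {alpha A L \<inter> (F ` profiles V A \<times> F ` profiles V A) | L. linear_order_on A L}"
proof
  let ?R = "F ` profiles V A"
  let ?cn = "connected_in ?R {alpha A L \<inter> ?R \<times> ?R | L. linear_order_on A L}"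
  assume "linked ?R {alpha A L \<inter> (?R \<times> ?R) | L. linear_order_on A L}"
  then obtain xs where xs: "distinct xs" "set xs = ?R" "2 \<le> length xs" "?cn (xs ! 0) (xs ! 1)"
    and step: "\<forall>j. 2 \<le> j \<and> j < length xs \<longrightarrow> 2 \<le> card {k. k < j \<and> ?cn (xs ! j) (xs ! k)}"
    unfolding linked_def by blast
  obtain B C G H where "B \<union> C = A" "B \<inter> C = {}"
    "\<forall>P\<in>profiles V B. G P \<in> B" "\<forall>P\<in>profiles V C. H P \<in> C"
    "\<forall>P\<in>profiles V A. F P = {G (restrict_profile P B), H (restrict_profile P C)}"
    using assms(6) unfolding reducible_def by blast
  then interpret consular_reduction V A B C G H F
    by unfold_locales simp_all
  have "?R \<subseteq> S2 A" using assms(4) unfolding consular_rule_def by blast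
  then have meet: "\<And>X Y. ?cn X Y \<Longrightarrow> X \<inter> Y \<noteq> {}"
    by (rule connected_in_alpha_meet[OF _ range_exchange_closed])
  then obtain e where e: "e \<in> xs ! 0" "e \<in> xs ! 1" using xs(4) by blast
  have "e \<in> xs ! j" if "j < length xs" for j
    using linked_enumeration_common_element[OF range_pairs_across partition(2) xs(1,2) meet e step that] .
  then have "\<forall>X\<in>?R. e \<in> X" using xs(2) by (metis in_set_conv_nth)
  moreover have "e \<in> A"
  proof -
    have "xs ! 0 \<in> ?R" using xs(2,3) nth_mem[of 0 xs] by fastforce
    then show ?thesis using \<open>?R \<subseteq> S2 A\<close> e(1) unfolding S2_def by blast
  qed
  ultimately show False using assms(5) unfolding marian_def by blast
qed

end
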